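(* Let $\mathbb{K}\in\{\mathbb{R},\mathbb{C}\}$ and let $\mathcal{X}$ be a topological $\mathbb{K}$-vector space whose topological dual $\mathcal{X}^{\ast}$ separates the points of $\mathcal{X}$. Then the set $\mathbf{B}(\mathcal{X}^{\ast})$ is a closed subset of $\mathbf{F}(\mathcal{X}^{\ast})$ in the weak*-Hausdorff hypertopology, it is convex and path-connected, and it is a connected component (maximal connected subset) of $\mathbf{F}(\mathcal{X}^{\ast})$.
   Context: Topological vector spaces are Hausdorff. $\mathcal{X}^{\ast}$ carries the weak* topology. $\mathbf{F}(\mathcal{X}^{\ast})$ is the set of nonempty weak*-closed subsets of $\mathcal{X}^{\ast}$, endowed with the weak*-Hausdorff hypertopology: the topology generated by the extended pseudometrics $d_H^{(A)}(F,\tilde F)=\max\{\sup_{\sigma\in F}\inf_{\tilde\sigma\in\tilde F}|(\sigma-\tilde\sigma)(A)|,\ \sup_{\tilde\sigma\in\tilde F}\inf_{\sigma\in F}|(\sigma-\tilde\sigma)(A)|\}\in[0,\infty]$, $A\in\mathcal{X}$. $\mathbf{B}(\mathcal{X}^{\ast})$ is the set of nonempty weak*-closed subsets $B\subseteq\mathcal{X}^{\ast}$ that are bounded in the weak* topology, i.e. $\sup_{\sigma\in B}|\sigma(A)|<\infty$ for every $A\in\mathcal{X}$. Convexity of $\mathbf{B}(\mathcal{X}^{\ast})$ means: for $B_0,B_1\in\mathbf{B}(\mathcal{X}^{\ast})$ and $\lambda\in[0,1]$, the (weak*-closure of the) set $\{(1-\lambda)\sigma_0+\lambda\sigma_1:\sigma_0\in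 B_0,\sigma_1\in B_1\}$ belongs to $\mathbf{B}(\mathcal{X}^{\ast})$. *)

theory Defs
  imports "HOL-Analysis.Analysis"
begin

text \<open>Scalar field: a type 'k of class real_normed_field and euclidean_space;
  such a type is (isomorphic to) the reals or the complex numbers.\<close>

definition tvs :: "('k::real_normed_field \<Rightarrow> 'x::{ab_group_add,t2_space} \<Rightarrow> 'x) \<Rightarrow> bool" where
  "tvs smult_X \<longleftrightarrow> Vector_Spaces.vector_space smult_X
     \<and> continuous_on UNIV (\<lambda>p::'x \<times> 'x. fst p + snd p)
     \<and> continuous_on UNIV (\<lambda>p::'k \<times> 'x. smult_X (fst p) (snd p))"

definition tdual :: "('k::real_normed_field \<Rightarrow> 'x::{ab_group_add,t2_space} \<Rightarrow> 'x) \<Rightarrow> ('x \<Rightarrow> 'k) set" where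
  "tdual smult_X = {\<sigma>. Vector_Spaces.linear smult_X (*) \<sigma> \<and> continuous_on UNIV \<sigma>}"

definition dual_separates :: "('k::real_normed_field \<Rightarrow> 'x::{ab_group_add,t2_space} \<Rightarrow> 'x) \<Rightarrow> bool" where
  "dual_separates smult_X \<longleftrightarrow> (\<forall>x y. x \<noteq> y \<longrightarrow> (\<exists>\<sigma>\<in>tdual smult_X. \<sigma> x \<noteq> \<sigma> y))"

definition weakstar :: "('k::real_normed_field \<Rightarrow> 'x::{ab_group_add,t2_space} \<Rightarrow> 'x) \<Rightarrow> ('x \<Rightarrow> 'k) topology" where
  "weakstar smult_X = topology_generated_by {{\<sigma>\<in>tdual smult_X. \<sigma> A \<in> U} | A U. open U}"

definition dH :: "'x \<Rightarrow> ('x \<Rightarrow> 'k::real_normed_field) set \<Rightarrow> ('x \<Rightarrow> 'k) set \<Rightarrow> ereal" where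
  "dH A F G = max (SUP \<sigma>\<in>F. INF \<tau>\<in>G. ereal (norm (\<sigma> A - \<tau> A)))
                   (SUP \<tau>\<in>G. INF \<sigma>\<in>F. ereal (norm (\<sigma> A - \<tau> A)))"

definition Fsets :: "('k::real_normed_field \<Rightarrow> 'x::{ab_group_add,t2_space} \<Rightarrow> 'x) \<Rightarrow> ('x \<Rightarrow> 'k) set set" where
  "Fsets smult_X = {F. F \<noteq> {} \<and> closedin (weakstar smult_X) F}"

definition Bsets :: "('k::real_normed_field \<Rightarrow> 'x::{ab_group_add,t2_space} \<Rightarrow> 'x) \<Rightarrow> ('x \<Rightarrow> 'k) set set" where
  "Bsets smult_X = {B \<in> Fsets smult_X. \<forall>A. bdd_above ((\<lambda>\<sigma>. norm (\<sigma> A)) ` B)}"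

definition hypertop :: "('k::real_normed_field \<Rightarrow> 'x::{ab_group_add,t2_space} \<Rightarrow> 'x) \<Rightarrow> ('x \<Rightarrow> 'k) set topology" where
  "hypertop smult_X = topology_generated_by
     {{G \<in> Fsets smult_X. dH A F G < ereal \<epsilon>} | A F \<epsilon>. F \<in> Fsets smult_X \<and> \<epsilon> > 0}"

end

theory Submission
  imports Defs
begin

text \<open>For fixed \<open>A\<close>, every set within \<open>dH A\<close>-distance 1 of a set \<open>G\<close> is bounded at \<open>A\<close>
  exactly when \<open>G\<close> is. Hence the sets bounded at \<open>A\<close> form a clopen subset of the hyperspace,
  and \<open>B(X\<^sup>*)\<close>, their intersection over all \<open>A\<close>, is closed and contains the connected
  component of each of its points. Conversely, scaling by \<open>t\<close> maps bounded sets to bounded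
  sets and, since \<open>|t \<sigma>(A) - t' \<sigma>(A)| \<le> |t - t'| sup\<^sub>B |\<sigma>(A)|\<close>, the sets \<open>t B\<close> depend
  continuously on \<open>t\<close>; the path \<open>t \<mapsto> t B\<close>, \<open>0 \<le> t \<le> 1\<close>, joins \<open>{0}\<close> to \<open>B\<close> inside
  \<open>B(X\<^sup>*)\<close>, which is therefore path-connected and a component. Convexity holds because the
  weak*-closed sets \<open>{\<sigma>. |\<sigma>(A)| \<le> M}\<close> survive taking closures.\<close>

lemma Inter_clopen_in_connected_components_of:
  assumes "connectedin X (\<Inter>i. T i)" "(\<Inter>i. T i) \<noteq> {}"
    and "\<And>i. closedin X (T i)" "\<And>i. openin X (T i)"
  shows "(\<Inter>i. T i) \<in> connected_components_of X"
proof -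
  obtain x where x: "x \<in> (\<Inter>i. T i)"
    using assms(2) by blast
  then have "x \<in> topspace X"
    using connectedin_subset_topspace[OF assms(1)] by blast
  moreover have "x \<in> connected_component_of_set X x"
    by (simp add: connected_component_of_refl \<open>x \<in> topspace X\<close>)
  ultimately have "connected_component_of_set X x \<subseteq> T i" for i
    using connectedin_clopen_cases[OF connectedin_connected_component_of assms(3,4)] x
    by (auto simp: disjnt_def)
  then have "connected_component_of_set X x = (\<Inter>i. T i)"
    using connected_component_of_maximal[OF assms(1) x] by blast
  then show ?thesis
    using \<open>x \<in> topspace X\<close> connected_component_in_connected_components_of by metis
qed

context
  fixes smult :: "'k::real_normed_field \<Rightarrow> 'x::{ab_group_add,t2_space} \<Rightarrow> 'x"
begin

lemma tdual_lincomb: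
  assumes "\<sigma> \<in> tdual smult" "\<tau> \<in> tdual smult"
  shows "(\<lambda>x. a * \<sigma> x + b * \<tau> x) \<in> tdual smult"
proof -
  have "Vector_Spaces.linear smult (*) \<sigma>" "Vector_Spaces.linear smult (*) \<tau>"
    and "continuous_on UNIV \<sigma>" "continuous_on UNIV \<tau>"
    using assms by (auto simp: tdual_def)
  then show ?thesis
    unfolding tdual_def Vector_Spaces.linear_def module_hom_def module_hom_axioms_def
    by (auto simp: algebra_simps module_iff_vector_space intro!: continuous_intros)
qed

lemma zero_in_tdual:
  assumes "tvs smult"
  shows "(\<lambda>x. 0) \<in> tdual smult"
proof -
  have "Vector_Spaces.vector_space smult"
    using assms by (simp add: tvs_def)
  then have "Vector_Spaces.linear smult (*) (\<lambda>x. 0::'k)"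
    unfolding Vector_Spaces.linear_def module_hom_def module_hom_axioms_def
    by (auto simp: module_iff_vector_space vector_space_over_itself.vector_space_axioms)
  then show ?thesis
    by (simp add: tdual_def)
qed

lemma topspace_weakstar: "topspace (weakstar smult) = tdual smult"
  unfolding weakstar_def topology_generated_by_topspace
  by (auto intro!: exI[of _ UNIV])

lemma openin_weakstar_eval:
  assumes "open V"
  shows "openin (weakstar smult) {\<sigma> \<in> tdual smult. \<sigma> A \<in> V}"
  unfolding weakstar_def by (rule topology_generated_by_Basis) (use assms in blast)

lemma closedin_weakstar_eval:
  assumes "closed K"
  shows "closedin (weakstar smult) {\<sigma> \<in> tdual smult. \<sigma> A \<in> K}"
proof -
  have "tdual smult - {\<sigma> \<in> tdual smult. \<sigma> A \<in> K} = {\<sigma> \<in> tdual smult. \<sigma> A \<in> - K}"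
    by auto
  then show ?thesis
    using openin_weakstar_eval[of "- K" A] assms by (simp add: closedin_def topspace_weakstar open_Compl)
qed

lemma closedin_weakstar_zero:
  assumes "tvs smult"
  shows "closedin (weakstar smult) {\<lambda>x. 0}"
proof -
  have "{\<lambda>x. 0} = (\<Inter>A. {\<sigma> \<in> tdual smult. \<sigma> A \<in> {0}})"
    using zero_in_tdual[OF assms] by (auto simp: fun_eq_iff)
  moreover have "closedin (weakstar smult) (\<Inter>A. {\<sigma> \<in> tdual smult. \<sigma> A \<in> {0}})"
    using closedin_weakstar_eval[of "{0}"] by (intro closedin_Inter) auto
  ultimately show ?thesis
    by simp
qed

lemma continuous_map_weakstar_eval: "continuous_map (weakstar smult) euclidean (\<lambda>\<sigma>. \<sigma> A)"
proof -
  have "(\<lambda>\<sigma>. \<sigma> A) -` V \<inter> tdual smult = {\<sigma> \<in> tdual smult. \<sigma> A \<in> V}" for V :: "'k set"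
    by auto
  then show ?thesis
    unfolding continuous_map_alt topspace_weakstar using openin_weakstar_eval
    by (simp flip: open_openin)
qed

lemma continuous_map_into_weakstar:
  assumes "g ` topspace X \<subseteq> tdual smult" "\<And>A. continuous_map X euclidean (\<lambda>t. g t A)"
  shows "continuous_map X (weakstar smult) g"
  unfolding weakstar_def
proof (rule continuous_on_generated_topo)
  fix U
  assume "U \<in> {{\<sigma> \<in> tdual smult. \<sigma> A \<in> V} | A V. open V}"
  then obtain A V where U: "U = {\<sigma> \<in> tdual smult. \<sigma> A \<in> V}" and "open V"
    by blast
  have "g -` U \<inter> topspace X = {t \<in> topspace X. g t A \<in> V}"
    using assms(1) unfolding U by blast
  moreover have "openin X {t \<in> topspace X. g t A \<in> V}"
    using openin_continuous_map_preimage[OF assms(2)[of A], of V] \<open>open V\<close>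
    by simp
  ultimately show "openin X (g -` U \<inter> topspace X)"
    by simp
next
  have "\<Union> {{\<sigma> \<in> tdual smult. \<sigma> A \<in> V} | A V. open V} = tdual smult"
    using topspace_weakstar unfolding weakstar_def topology_generated_by_topspace .
  then show "g ` topspace X \<subseteq> \<Union> {{\<sigma> \<in> tdual smult. \<sigma> A \<in> V} | A V. open V}"
    using assms(1) by simp
qed

lemma continuous_map_weakstar_scale:
  "continuous_map (weakstar smult) (weakstar smult) (\<lambda>\<sigma> x. c * \<sigma> x)"
proof (rule continuous_map_into_weakstar)
  have "(\<lambda>x. c * \<sigma> x) \<in> tdual smult" if "\<sigma> \<in> tdual smult" for \<sigma>
    using tdual_lincomb[OF that that, of c 0] by simp
  then show "(\<lambda>\<sigma> x. c * \<sigma> x) ` topspace (weakstar smult) \<subseteq> tdual smult"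
    by (auto simp: topspace_weakstar)
  have "continuous_map euclidean euclidean (\<lambda>z::'k. c * z)"
    by (simp add: continuous_on_mult_left)
  from continuous_map_compose[OF continuous_map_weakstar_eval this]
  show "continuous_map (weakstar smult) euclidean (\<lambda>\<sigma>. c * \<sigma> A)" for A
    by (simp add: o_def)
qed

lemma Fsets_subset_tdual: "F \<in> Fsets smult \<Longrightarrow> F \<subseteq> tdual smult"
  using closedin_subset[of "weakstar smult" F] by (simp add: Fsets_def topspace_weakstar)

lemma Bsets_subset_tdual: "B \<in> Bsets smult \<Longrightarrow> B \<subseteq> tdual smult"
  by (simp add: Bsets_def Fsets_subset_tdual)

lemma scale_in_Fsets:
  assumes "tvs smult" "B \<in> Fsets smult"
  shows "(\<lambda>\<sigma> x. c * \<sigma> x) ` B \<in> Fsets smult"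
proof (cases "c = 0")
  case True
  have "B \<noteq> {}"
    using assms(2) by (simp add: Fsets_def)
  then have "(\<lambda>\<sigma> x. c * \<sigma> x) ` B = {\<lambda>x. 0}"
    using True by (simp add: image_constant_conv)
  then show ?thesis
    using closedin_weakstar_zero[OF assms(1)] by (simp add: Fsets_def)
next
  case False
  have "(\<lambda>\<sigma> x. c * \<sigma> x) ` B = {\<rho> \<in> tdual smult. (\<lambda>x. inverse c * \<rho> x) \<in> B}"
  proof
    show "(\<lambda>\<sigma> x. c * \<sigma> x) ` B \<subseteq> {\<rho> \<in> tdual smult. (\<lambda>x. inverse c * \<rho> x) \<in> B}"
    proof (rule image_subsetI)
      fix \<sigma>
      assume "\<sigma> \<in> B"
      then have "\<sigma> \<in> tdual smult"
        using Fsets_subset_tdual[OF assms(2)] by blast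
      then have "(\<lambda>x. c * \<sigma> x) \<in> tdual smult"
        using tdual_lincomb[of \<sigma> \<sigma> c 0] by simp
      moreover have "(\<lambda>x. inverse c * (c * \<sigma> x)) = \<sigma>"
        using False by (simp add: field_simps)
      ultimately show "(\<lambda>x. c * \<sigma> x) \<in> {\<rho> \<in> tdual smult. (\<lambda>x. inverse c * \<rho> x) \<in> B}"
        using \<open>\<sigma> \<in> B\<close> by simp
    qed
    show "{\<rho> \<in> tdual smult. (\<lambda>x. inverse c * \<rho> x) \<in> B} \<subseteq> (\<lambda>\<sigma> x. c * \<sigma> x) ` B"
    proof
      fix \<rho>
      assume "\<rho> \<in> {\<rho> \<in> tdual smult. (\<lambda>x. inverse c * \<rho> x) \<in> B}"
      then have "(\<lambda>x. inverse c * \<rho> x) \<in> B"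
        by simp
      moreover have "\<rho> = (\<lambda>x. c * (inverse c * \<rho> x))"
        using False by (simp add: field_simps)
      ultimately show "\<rho> \<in> (\<lambda>\<sigma> x. c * \<sigma> x) ` B"
        using image_eqI[of \<rho> "\<lambda>\<sigma> x. c * \<sigma> x" "\<lambda>x. inverse c * \<rho> x" B] by simp
    qed
  qed
  moreover have "closedin (weakstar smult) {\<rho> \<in> tdual smult. (\<lambda>x. inverse c * \<rho> x) \<in> B}"
    using closedin_continuous_map_preimage[OF continuous_map_weakstar_scale, of B "inverse c"] assms(2)
    by (simp add: Fsets_def topspace_weakstar)
  ultimately have "closedin (weakstar smult) ((\<lambda>\<sigma> x. c * \<sigma> x) ` B)"
    by simp
  then show ?thesis
    using assms(2) by (simp add: Fsets_def)
qed

lemma bdd_above_norm_eval_scale: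
  fixes B :: "('a \<Rightarrow> 'b::real_normed_div_algebra) set"
  assumes "bdd_above ((\<lambda>\<sigma>. norm (\<sigma> A)) ` B)"
  shows "bdd_above ((\<lambda>\<sigma>. norm (\<sigma> A)) ` (\<lambda>\<sigma> x. c * \<sigma> x) ` B)"
proof -
  obtain M where M: "\<forall>\<sigma>\<in>B. norm (\<sigma> A) \<le> M"
    using assms by (auto simp: bdd_above_def)
  have "norm (c * \<sigma> A) \<le> norm c * M" if "\<sigma> \<in> B" for \<sigma>
    unfolding norm_mult using M that by (simp add: mult_left_mono)
  then show ?thesis
    by (intro bdd_aboveI2[where M = "norm c * M"]) auto
qed

lemma scale_in_Bsets:
  assumes "tvs smult" "B \<in> Bsets smult"
  shows "(\<lambda>\<sigma> x. c * \<sigma> x) ` B \<in> Bsets smult"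
  using assms by (simp add: Bsets_def scale_in_Fsets bdd_above_norm_eval_scale)

lemma zero_in_Bsets:
  assumes "tvs smult"
  shows "{\<lambda>x. 0} \<in> Bsets smult"
  using closedin_weakstar_zero[OF assms] by (simp add: Bsets_def Fsets_def)

lemma closure_of_in_Bsets:
  assumes "S \<subseteq> tdual smult" "S \<noteq> {}" "\<And>A. bdd_above ((\<lambda>\<sigma>. norm (\<sigma> A)) ` S)"
  shows "weakstar smult closure_of S \<in> Bsets smult"
proof -
  have "bdd_above ((\<lambda>\<sigma>. norm (\<sigma> A)) ` (weakstar smult closure_of S))" for A
  proof -
    obtain M where "\<forall>\<sigma>\<in>S. norm (\<sigma> A) \<le> M"
      using assms(3)[of A] by (auto simp: bdd_above_def)
    then have "S \<subseteq> {\<sigma> \<in> tdual smult. \<sigma> A \<in> cball 0 M}"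
      using assms(1) by auto
    then have "weakstar smult closure_of S \<subseteq> {\<sigma> \<in> tdual smult. \<sigma> A \<in> cball 0 M}"
      by (intro closure_of_minimal closedin_weakstar_eval) auto
    then show ?thesis
      by (intro bdd_aboveI2[where M = M]) auto
  qed
  moreover have "weakstar smult closure_of S \<noteq> {}"
    using assms(1,2) closure_of_subset[of S "weakstar smult"] by (auto simp: topspace_weakstar)
  ultimately show ?thesis
    by (simp add: Bsets_def Fsets_def)
qed

lemma convex_combination_in_Bsets:
  assumes "B0 \<in> Bsets smult" "B1 \<in> Bsets smult" "0 \<le> l" "l \<le> 1"
  shows "weakstar smult closure_of
      {(\<lambda>x. of_real (1 - l) * \<sigma>0 x + of_real l * \<sigma>1 x) | \<sigma>0 \<sigma>1. \<sigma>0 \<in> B0 \<and> \<sigma>1 \<in> B1}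
    \<in> Bsets smult"
proof (rule closure_of_in_Bsets)
  show "{(\<lambda>x. of_real (1 - l) * \<sigma>0 x + of_real l * \<sigma>1 x) | \<sigma>0 \<sigma>1. \<sigma>0 \<in> B0 \<and> \<sigma>1 \<in> B1}
      \<subseteq> tdual smult"
  proof
    fix \<rho>
    assume "\<rho> \<in> {(\<lambda>x. of_real (1 - l) * \<sigma>0 x + of_real l * \<sigma>1 x) | \<sigma>0 \<sigma>1. \<sigma>0 \<in> B0 \<and> \<sigma>1 \<in> B1}"
    then obtain \<sigma>0 \<sigma>1 where "\<rho> = (\<lambda>x. of_real (1 - l) * \<sigma>0 x + of_real l * \<sigma>1 x)"
      and "\<sigma>0 \<in> tdual smult" "\<sigma>1 \<in> tdual smult"
      using Bsets_subset_tdual[OF assms(1)] Bsets_subset_tdual[OF assms(2)] by blast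
    then show "\<rho> \<in> tdual smult"
      using tdual_lincomb by simp
  qed
  obtain \<sigma>0 \<sigma>1 where "\<sigma>0 \<in> B0" "\<sigma>1 \<in> B1"
    using assms(1,2) by (auto simp: Bsets_def Fsets_def)
  then show "{(\<lambda>x. of_real (1 - l) * \<sigma>0 x + of_real l * \<sigma>1 x) | \<sigma>0 \<sigma>1. \<sigma>0 \<in> B0 \<and> \<sigma>1 \<in> B1} \<noteq> {}"
    by blast
next
  fix A
  have "bdd_above ((\<lambda>\<sigma>. norm (\<sigma> A)) ` B0)" "bdd_above ((\<lambda>\<sigma>. norm (\<sigma> A)) ` B1)"
    using assms(1,2) by (simp_all add: Bsets_def)
  then obtain M0 M1 where M0: "\<forall>\<sigma>\<in>B0. norm (\<sigma> A) \<le> M0" and M1: "\<forall>\<sigma>\<in>B1. norm (\<sigma> A) \<le> M1"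
    by (auto simp: bdd_above_def)
  show "bdd_above ((\<lambda>\<sigma>. norm (\<sigma> A)) `
      {(\<lambda>x. of_real (1 - l) * \<sigma>0 x + of_real l * \<sigma>1 x) | \<sigma>0 \<sigma>1. \<sigma>0 \<in> B0 \<and> \<sigma>1 \<in> B1})"
  proof (rule bdd_aboveI2)
    fix \<rho>
    assume "\<rho> \<in> {(\<lambda>x. of_real (1 - l) * \<sigma>0 x + of_real l * \<sigma>1 x) | \<sigma>0 \<sigma>1. \<sigma>0 \<in> B0 \<and> \<sigma>1 \<in> B1}"
    then obtain \<sigma>0 \<sigma>1 where \<rho>: "\<rho> = (\<lambda>x. of_real (1 - l) * \<sigma>0 x + of_real l * \<sigma>1 x)"
      and "\<sigma>0 \<in> B0" "\<sigma>1 \<in> B1"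
      by blast
    have "norm (\<rho> A) \<le> norm (of_real (1 - l) * \<sigma>0 A) + norm (of_real l * \<sigma>1 A)"
      unfolding \<rho> by (rule norm_triangle_ineq)
    also have "\<dots> = (1 - l) * norm (\<sigma>0 A) + l * norm (\<sigma>1 A)"
      by (simp only: norm_mult norm_of_real) (use assms(3,4) in simp)
    also have "\<dots> \<le> norm (\<sigma>0 A) + norm (\<sigma>1 A)"
      using assms(3,4) by (intro add_mono mult_left_le_one_le) auto
    also have "\<dots> \<le> M0 + M1"
      using M0 M1 \<open>\<sigma>0 \<in> B0\<close> \<open>\<sigma>1 \<in> B1\<close> by (simp add: add_mono)
    finally show "norm (\<rho> A) \<le> M0 + M1" .
  qed
qed

lemma dH_less_imp:
  assumes "dH A F G < ereal e"
  shows "\<forall>\<sigma>\<in>F. \<exists>\<tau>\<in>G. norm (\<sigma> A - \<tau> A) < e" and "\<forall>\<tau>\<in>G. \<exists>\<sigma>\<in>F. norm (\<sigma> A - \<tau> A) < e"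
proof -
  have sup1: "(SUP \<sigma>\<in>F. INF \<tau>\<in>G. ereal (norm (\<sigma> A - \<tau> A))) < ereal e"
    and sup2: "(SUP \<tau>\<in>G. INF \<sigma>\<in>F. ereal (norm (\<sigma> A - \<tau> A))) < ereal e"
    using assms by (auto simp: dH_def)
  show "\<forall>\<sigma>\<in>F. \<exists>\<tau>\<in>G. norm (\<sigma> A - \<tau> A) < e"
  proof
    fix \<sigma>
    assume "\<sigma> \<in> F"
    with SUP_lessD[OF sup1] show "\<exists>\<tau>\<in>G. norm (\<sigma> A - \<tau> A) < e"
      by (simp add: INF_less_iff)
  qed
  show "\<forall>\<tau>\<in>G. \<exists>\<sigma>\<in>F. norm (\<sigma> A - \<tau> A) < e"
  proof
    fix \<tau>
    assume "\<tau> \<in> G"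
    with SUP_lessD[OF sup2] show "\<exists>\<sigma>\<in>F. norm (\<sigma> A - \<tau> A) < e"
      by (simp add: INF_less_iff)
  qed
qed

lemma dH_le_ereal:
  assumes "\<forall>\<sigma>\<in>F. \<exists>\<tau>\<in>G. norm (\<sigma> A - \<tau> A) \<le> e" and "\<forall>\<tau>\<in>G. \<exists>\<sigma>\<in>F. norm (\<sigma> A - \<tau> A) \<le> e"
  shows "dH A F G \<le> ereal e"
  unfolding dH_def
proof (intro max.boundedI SUP_least)
  fix \<sigma>
  assume "\<sigma> \<in> F"
  then obtain \<tau> where "\<tau> \<in> G" "norm (\<sigma> A - \<tau> A) \<le> e"
    using assms(1) by blast
  then show "(INF \<tau>\<in>G. ereal (norm (\<sigma> A - \<tau> A))) \<le> ereal e"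
    by (intro INF_lower2) auto
next
  fix \<tau>
  assume "\<tau> \<in> G"
  then obtain \<sigma> where "\<sigma> \<in> F" "norm (\<sigma> A - \<tau> A) \<le> e"
    using assms(2) by blast
  then show "(INF \<sigma>\<in>F. ereal (norm (\<sigma> A - \<tau> A))) \<le> ereal e"
    by (intro INF_lower2) auto
qed

lemma dH_self_less:
  assumes "\<epsilon> > 0"
  shows "dH A F F < ereal \<epsilon>"
proof -
  have "dH A F F \<le> ereal 0"
    by (rule dH_le_ereal) auto
  moreover have "ereal 0 < ereal \<epsilon>"
    using assms by simp
  ultimately show ?thesis
    by (rule order.strict_trans1)
qed

lemma dH_less_triangle:
  assumes "dH A F G < ereal e"
    and "\<forall>\<sigma>\<in>G. \<exists>\<tau>\<in>H. norm (\<sigma> A - \<tau> A) \<le> d" "\<forall>\<tau>\<in>H. \<exists>\<sigma>\<in>G. norm (\<sigma> A - \<tau> A) \<le> d"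
  shows "dH A F H < ereal (e + d)"
proof -
  obtain e0 where e0: "dH A F G < ereal e0" "e0 < e"
    using ereal_dense2[OF assms(1)] by auto
  note near = dH_less_imp[OF e0(1)]
  have "dH A F H \<le> ereal (e0 + d)"
  proof (rule dH_le_ereal)
    show "\<forall>\<sigma>\<in>F. \<exists>\<rho>\<in>H. norm (\<sigma> A - \<rho> A) \<le> e0 + d"
    proof
      fix \<sigma>
      assume "\<sigma> \<in> F"
      then obtain \<tau> where "\<tau> \<in> G" "norm (\<sigma> A - \<tau> A) \<le> e0"
        using near(1) less_imp_le by blast
      moreover obtain \<rho> where "\<rho> \<in> H" "norm (\<tau> A - \<rho> A) \<le> d"
        using assms(2) \<open>\<tau> \<in> G\<close> by blast
      ultimately show "\<exists>\<rho>\<in>H. norm (\<sigma> A - \<rho> A) \<le> e0 + d"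
        using norm_diff_triangle_le by blast
    qed
    show "\<forall>\<rho>\<in>H. \<exists>\<sigma>\<in>F. norm (\<sigma> A - \<rho> A) \<le> e0 + d"
    proof
      fix \<rho>
      assume "\<rho> \<in> H"
      then obtain \<tau> where "\<tau> \<in> G" "norm (\<tau> A - \<rho> A) \<le> d"
        using assms(3) by blast
      moreover obtain \<sigma> where "\<sigma> \<in> F" "norm (\<sigma> A - \<tau> A) \<le> e0"
        using near(2) \<open>\<tau> \<in> G\<close> less_imp_le by blast
      ultimately show "\<exists>\<sigma>\<in>F. norm (\<sigma> A - \<rho> A) \<le> e0 + d"
        using norm_diff_triangle_le by blast
    qed
  qed
  moreover have "ereal (e0 + d) < ereal (e + d)"
    using e0(2) by simp
  ultimately show ?thesis
    by (rule order.strict_trans1)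
qed

lemma openin_hypertop_ball:
  assumes "F \<in> Fsets smult" "\<epsilon> > 0"
  shows "openin (hypertop smult) {G \<in> Fsets smult. dH A F G < ereal \<epsilon>}"
  unfolding hypertop_def using assms by (intro topology_generated_by_Basis) blast

lemma topspace_hypertop: "topspace (hypertop smult) = Fsets smult"
proof
  show "topspace (hypertop smult) \<subseteq> Fsets smult"
    unfolding hypertop_def by auto
  show "Fsets smult \<subseteq> topspace (hypertop smult)"
  proof
    fix F
    assume "F \<in> Fsets smult"
    then have "F \<in> {G \<in> Fsets smult. dH undefined F G < ereal 1}"
      using dH_self_less[of 1 undefined F] by simp
    then show "F \<in> topspace (hypertop smult)"
      using openin_subset[OF openin_hypertop_ball[OF \<open>F \<in> Fsets smult\<close>, of 1 undefined]] by auto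
  qed
qed

lemma continuous_map_into_hypertop:
  assumes "g ` topspace X \<subseteq> Fsets smult"
    and "\<And>A F \<epsilon>. F \<in> Fsets smult \<Longrightarrow> \<epsilon> > 0 \<Longrightarrow> openin X {t \<in> topspace X. dH A F (g t) < ereal \<epsilon>}"
  shows "continuous_map X (hypertop smult) g"
  unfolding hypertop_def
proof (rule continuous_on_generated_topo)
  fix U
  assume "U \<in> {{G \<in> Fsets smult. dH A F G < ereal \<epsilon>} | A F \<epsilon>. F \<in> Fsets smult \<and> \<epsilon> > 0}"
  then obtain A F \<epsilon> where U: "U = {G \<in> Fsets smult. dH A F G < ereal \<epsilon>}" "F \<in> Fsets smult" "\<epsilon> > 0"
    by auto
  then have "g -` U \<inter> topspace X = {t \<in> topspace X. dH A F (g t) < ereal \<epsilon>}"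
    using assms(1) by auto
  then show "openin X (g -` U \<inter> topspace X)"
    using assms(2)[OF U(2,3)] by simp
next
  show "g ` topspace X \<subseteq> \<Union> {{G \<in> Fsets smult. dH A F G < ereal \<epsilon>} | A F \<epsilon>. F \<in> Fsets smult \<and> \<epsilon> > 0}"
    using assms(1) topspace_hypertop by (simp add: hypertop_def)
qed

lemma bdd_above_norm_eval_if_near:
  fixes F G :: "('a \<Rightarrow> 'b::real_normed_vector) set"
  assumes "\<forall>\<sigma>\<in>F. \<exists>\<tau>\<in>G. norm (\<sigma> A - \<tau> A) < e" "bdd_above ((\<lambda>\<tau>. norm (\<tau> A)) ` G)"
  shows "bdd_above ((\<lambda>\<sigma>. norm (\<sigma> A)) ` F)"
proof -
  obtain M where M: "\<forall>\<tau>\<in>G. norm (\<tau> A) \<le> M"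
    using assms(2) by (auto simp: bdd_above_def)
  have "norm (\<sigma> A) \<le> e + M" if "\<sigma> \<in> F" for \<sigma>
  proof -
    obtain \<tau> where "\<tau> \<in> G" "norm (\<sigma> A - \<tau> A) < e"
      using assms(1) \<open>\<sigma> \<in> F\<close> by blast
    have "norm (\<sigma> A) \<le> norm (\<sigma> A - \<tau> A) + norm (\<tau> A)"
      using norm_triangle_ineq[of "\<sigma> A - \<tau> A" "\<tau> A"] by simp
    also have "\<dots> \<le> e + M"
      using \<open>norm (\<sigma> A - \<tau> A) < e\<close> M \<open>\<tau> \<in> G\<close> by (intro add_mono) auto
    finally show ?thesis .
  qed
  then show ?thesis
    by (rule bdd_aboveI2)
qed

lemma dH_less_imp_bdd_above_iff:
  assumes "dH A G H < ereal e"
  shows "bdd_above ((\<lambda>\<sigma>. norm (\<sigma> A)) ` G) \<longleftrightarrow> bdd_above ((\<lambda>\<sigma>. norm (\<sigma> A)) ` H)"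
proof -
  have "\<forall>\<tau>\<in>H. \<exists>\<sigma>\<in>G. norm (\<tau> A - \<sigma> A) < e"
    using dH_less_imp(2)[OF assms] by (simp add: norm_minus_commute)
  show ?thesis
  proof
    assume "bdd_above ((\<lambda>\<sigma>. norm (\<sigma> A)) ` G)"
    with \<open>\<forall>\<tau>\<in>H. \<exists>\<sigma>\<in>G. norm (\<tau> A - \<sigma> A) < e\<close>
    show "bdd_above ((\<lambda>\<sigma>. norm (\<sigma> A)) ` H)"
      by (rule bdd_above_norm_eval_if_near)
  next
    assume "bdd_above ((\<lambda>\<sigma>. norm (\<sigma> A)) ` H)"
    with dH_less_imp(1)[OF assms] show "bdd_above ((\<lambda>\<sigma>. norm (\<sigma> A)) ` G)"
      by (rule bdd_above_norm_eval_if_near)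
  qed
qed

lemma openin_hypertop_if_contains_balls:
  assumes "P \<subseteq> Fsets smult" "\<epsilon> > 0"
    and "\<And>G H. G \<in> P \<Longrightarrow> H \<in> Fsets smult \<Longrightarrow> dH A G H < ereal \<epsilon> \<Longrightarrow> H \<in> P"
  shows "openin (hypertop smult) P"
proof (subst openin_subopen, intro ballI exI conjI)
  fix G
  assume "G \<in> P"
  show "openin (hypertop smult) {H \<in> Fsets smult. dH A G H < ereal \<epsilon>}"
    using \<open>G \<in> P\<close> assms(1,2) by (intro openin_hypertop_ball) auto
  show "G \<in> {H \<in> Fsets smult. dH A G H < ereal \<epsilon>}"
    using \<open>G \<in> P\<close> assms(1) dH_self_less[OF assms(2)] by auto
  show "{H \<in> Fsets smult. dH A G H < ereal \<epsilon>} \<subseteq> P"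
    using \<open>G \<in> P\<close> assms(3) by blast
qed

definition Fsets_bdd_at :: "'x \<Rightarrow> ('x \<Rightarrow> 'k) set set" where
  "Fsets_bdd_at A = {G \<in> Fsets smult. bdd_above ((\<lambda>\<sigma>. norm (\<sigma> A)) ` G)}"

lemma openin_Fsets_bdd_at: "openin (hypertop smult) (Fsets_bdd_at A)"
proof (rule openin_hypertop_if_contains_balls)
  show "Fsets_bdd_at A \<subseteq> Fsets smult"
    by (auto simp: Fsets_bdd_at_def)
  show "H \<in> Fsets_bdd_at A"
    if "G \<in> Fsets_bdd_at A" "H \<in> Fsets smult" "dH A G H < ereal 1" for G H
    using that dH_less_imp_bdd_above_iff[OF that(3)] by (simp add: Fsets_bdd_at_def)
qed simp

lemma closedin_Fsets_bdd_at: "closedin (hypertop smult) (Fsets_bdd_at A)"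
proof -
  have "openin (hypertop smult) (Fsets smult - Fsets_bdd_at A)"
  proof (rule openin_hypertop_if_contains_balls)
    show "H \<in> Fsets smult - Fsets_bdd_at A"
      if "G \<in> Fsets smult - Fsets_bdd_at A" "H \<in> Fsets smult" "dH A G H < ereal 1" for G H
      using that dH_less_imp_bdd_above_iff[OF that(3)] by (simp add: Fsets_bdd_at_def)
  qed auto
  then show ?thesis
    by (auto simp: closedin_def topspace_hypertop Fsets_bdd_at_def)
qed

lemma Bsets_eq_Inter_Fsets_bdd_at: "Bsets smult = (\<Inter>A. Fsets_bdd_at A)"
  by (auto simp: Bsets_def Fsets_bdd_at_def)

lemma closedin_Bsets: "closedin (hypertop smult) (Bsets smult)"
  unfolding Bsets_eq_Inter_Fsets_bdd_at by (intro closedin_Inter) (auto intro: closedin_Fsets_bdd_at)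

lemma dH_scale_less:
  assumes "dH A F ((\<lambda>\<sigma> x. of_real t0 * \<sigma> x) ` B) < ereal e" "\<forall>\<sigma>\<in>B. norm (\<sigma> A) \<le> M"
  shows "dH A F ((\<lambda>\<sigma> x. of_real t * \<sigma> x) ` B) < ereal (e + \<bar>t - t0\<bar> * M)"
proof -
  have "norm (of_real t0 * \<sigma> A - of_real t * \<sigma> A) \<le> \<bar>t - t0\<bar> * M" if "\<sigma> \<in> B" for \<sigma>
  proof -
    have "norm (of_real t0 * \<sigma> A - of_real t * \<sigma> A) = \<bar>t - t0\<bar> * norm (\<sigma> A)"
      by (simp add: norm_mult abs_minus_commute flip: left_diff_distrib of_real_diff)
    then show ?thesis
      using assms(2) that by (simp add: mult_left_mono)
  qed
  then show ?thesis
    by (intro dH_less_triangle[OF assms(1)]) auto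
qed

lemma continuous_map_scale_path:
  assumes "tvs smult" "B \<in> Bsets smult"
  shows "continuous_map euclideanreal (hypertop smult) (\<lambda>t. (\<lambda>\<sigma> x. of_real t * \<sigma> x) ` B)"
proof (rule continuous_map_into_hypertop)
  show "(\<lambda>t. (\<lambda>\<sigma> x. of_real t * \<sigma> x) ` B) ` topspace euclideanreal \<subseteq> Fsets smult"
    using scale_in_Bsets[OF assms] by (auto simp: Bsets_def)
  fix A F \<epsilon>
  have "bdd_above ((\<lambda>\<sigma>. norm (\<sigma> A)) ` B)"
    using assms(2) by (simp add: Bsets_def)
  then obtain M0 where "\<forall>\<sigma>\<in>B. norm (\<sigma> A) \<le> M0"
    by (auto simp: bdd_above_def)
  then obtain M where M: "\<forall>\<sigma>\<in>B. norm (\<sigma> A) \<le> M" "M > 0"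
    by (metis le_max_iff_disj max.strict_coboundedI2 zero_less_one)
  have "open {t. dH A F ((\<lambda>\<sigma> x. of_real t * \<sigma> x) ` B) < ereal \<epsilon>}"
    unfolding open_dist
  proof (intro ballI)
    fix t0
    assume "t0 \<in> {t. dH A F ((\<lambda>\<sigma> x. of_real t * \<sigma> x) ` B) < ereal \<epsilon>}"
    then have "dH A F ((\<lambda>\<sigma> x. of_real t0 * \<sigma> x) ` B) < ereal \<epsilon>"
      by simp
    then obtain e where e: "dH A F ((\<lambda>\<sigma> x. of_real t0 * \<sigma> x) ` B) < ereal e" "e < \<epsilon>"
      using ereal_dense2 by fastforce
    have "dH A F ((\<lambda>\<sigma> x. of_real t * \<sigma> x) ` B) < ereal \<epsilon>" if "dist t t0 < (\<epsilon> - e) / M" for t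
    proof -
      have "\<bar>t - t0\<bar> * M < \<epsilon> - e"
        using that M(2) by (simp add: dist_real_def pos_less_divide_eq)
      then have "ereal (e + \<bar>t - t0\<bar> * M) < ereal \<epsilon>"
        by simp
      with dH_scale_less[OF e(1) M(1)] show ?thesis
        by (rule order.strict_trans)
    qed
    then show "\<exists>\<delta>>0. \<forall>t. dist t t0 < \<delta> \<longrightarrow> t \<in> {t. dH A F ((\<lambda>\<sigma> x. of_real t * \<sigma> x) ` B) < ereal \<epsilon>}"
      using e(2) M(2) by (intro exI[of _ "(\<epsilon> - e) / M"]) auto
  qed
  then show "openin euclideanreal {t \<in> topspace euclideanreal. dH A F ((\<lambda>\<sigma> x. of_real t * \<sigma> x) ` B) < ereal \<epsilon>}"
    by simp
qed

lemma path_component_of_zero_Bsets: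
  assumes "tvs smult" "B \<in> Bsets smult"
  shows "path_component_of (subtopology (hypertop smult) (Bsets smult)) {\<lambda>x. 0} B"
  unfolding path_component_of_def
proof (intro exI conjI)
  let ?g = "\<lambda>t::real. (\<lambda>\<sigma> x. of_real t * \<sigma> x) ` B"
  show "pathin (subtopology (hypertop smult) (Bsets smult)) ?g"
    unfolding pathin_def
    using scale_in_Bsets[OF assms]
    by (intro continuous_map_into_subtopology continuous_map_from_subtopology
        continuous_map_scale_path[OF assms]) auto
  show "?g 0 = {\<lambda>x. 0}"
    using assms(2) by (auto simp: Bsets_def Fsets_def)
  show "?g 1 = B"
    by simp
qed

lemma path_connectedin_Bsets:
  assumes "tvs smult"
  shows "path_connectedin (hypertop smult) (Bsets smult)"
  unfolding path_connectedin_def path_connected_space_iff_path_component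
proof (intro conjI ballI)
  show "Bsets smult \<subseteq> topspace (hypertop smult)"
    by (auto simp: topspace_hypertop Bsets_def)
  fix B B'
  assume "B \<in> topspace (subtopology (hypertop smult) (Bsets smult))"
    and "B' \<in> topspace (subtopology (hypertop smult) (Bsets smult))"
  then have "B \<in> Bsets smult" "B' \<in> Bsets smult"
    by auto
  then show "path_component_of (subtopology (hypertop smult) (Bsets smult)) B B'"
    using path_component_of_zero_Bsets[OF assms]
    by (blast intro: path_component_of_trans path_component_of_sym)
qed

lemma Bsets_in_connected_components_of:
  assumes "tvs smult"
  shows "Bsets smult \<in> connected_components_of (hypertop smult)"
  unfolding Bsets_eq_Inter_Fsets_bdd_at
proof (rule Inter_clopen_in_connected_components_of)
  show "connectedin (hypertop smult) (\<Inter>A. Fsets_bdd_at A)"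
    using path_connectedin_imp_connectedin[OF path_connectedin_Bsets[OF assms]]
    by (simp add: Bsets_eq_Inter_Fsets_bdd_at)
  show "(\<Inter>A. Fsets_bdd_at A) \<noteq> {}"
    using zero_in_Bsets[OF assms] by (auto simp: Bsets_eq_Inter_Fsets_bdd_at)
qed (rule closedin_Fsets_bdd_at, rule openin_Fsets_bdd_at)

end

theorem proposition3p4:
  fixes smult_X :: "'k::{real_normed_field,euclidean_space} \<Rightarrow> 'x::{ab_group_add,t2_space} \<Rightarrow> 'x"
  assumes "tvs smult_X"
    and "dual_separates smult_X"
  shows "closedin (hypertop smult_X) (Bsets smult_X)
    \<and> (\<forall>B0\<in>Bsets smult_X. \<forall>B1\<in>Bsets smult_X. \<forall>l::real. 0 \<le> l \<and> l \<le> 1 \<longrightarrow>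
          (weakstar smult_X) closure_of
            {(\<lambda>x. of_real (1 - l) * \<sigma>0 x + of_real l * \<sigma>1 x) | \<sigma>0 \<sigma>1. \<sigma>0 \<in> B0 \<and> \<sigma>1 \<in> B1}
          \<in> Bsets smult_X)
    \<and> path_connectedin (hypertop smult_X) (Bsets smult_X)
    \<and> Bsets smult_X \<in> connected_components_of (hypertop smult_X)"
  using closedin_Bsets convex_combination_in_Bsets path_connectedin_Bsets[OF assms(1)]
    Bsets_in_connected_components_of[OF assms(1)]
  by blast

end
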